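(* Let $S$ be a surface, $\phi:S\to\mathbf{Ein}^{1,1}$ an immersion with $\phi^*\tau$ trivial, $g$ a Lorentz metric on $S$ compatible with the induced split structure, and $(u_t)_{t}$ a smooth family of functions on $S$ with $u_0=0$; set $u=\frac{\mathrm d}{\mathrm dt}\big|_{t=0}u_t$. Let $\sigma_t$ be the isotropic surface associated with $g_t=e^{2u_t}g$ (so that $\sigma_t=e^{u_t}\sigma_0$) and $\eta_t$ its dual isotropic surface; write $\sigma=\sigma_0,\eta=\eta_0$ and dots for $t$-derivatives at $t=0$. Then $$\dot\sigma=u\,\sigma,\qquad \dot\eta=-u\,\eta-\mathrm D_{\nabla^gu}\sigma,$$ where $\nabla^gu$ is the $g$-gradient of $u$, i.e. the vector field with $g(\nabla^gu,\cdot)=\mathrm du$.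
   Context: $W$ is a real $4$-dimensional vector space with a quadratic form of signature $(2,2)$ and polar form $\langle\cdot,\cdot\rangle$; $\mathbf{Ein}^{1,1}\subset\mathbf P(W)$ is the isotropic quadric with tautological line bundle $\tau$ and canonical split structure (fibers of the two projections under a Segre identification with $\mathbf{RP}^1\times\mathbf{RP}^1$). The isotropic surface associated with a compatible metric $h$ is the (unique up to sign) map $\sigma:S\to W$ with $\langle\sigma,\sigma\rangle=0$, $[\sigma]=\phi$, and $h(X,Y)=\langle\mathrm D_X\sigma,\mathrm D_Y\sigma\rangle$. Its dual isotropic surface is the map $\eta$ with $\langle\eta,\sigma\rangle=1$, $\langle\eta,\eta\rangle=0$, $\langle\eta,\mathrm D_X\sigma\rangle=0$ for all tangent $X$. *)

theory Defs
  imports "HOL-Analysis.Analysis"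
begin

text \<open>Local model: the surface S is (a coordinate patch) an open set U in real^2,
  tangent vectors are elements of real^2. W is real^4 with a symmetric bilinear
  form B of signature (2,2).\<close>

fun smooth_k :: "nat \<Rightarrow> 'a::euclidean_space set \<Rightarrow> ('a \<Rightarrow> 'b::real_normed_vector) \<Rightarrow> bool" where
  "smooth_k 0 U f = continuous_on U f"
| "smooth_k (Suc k) U f =
     (\<exists>f'. (\<forall>x\<in>U. (f has_derivative f' x) (at x)) \<and> (\<forall>v. smooth_k k U (\<lambda>x. f' x v)))"

definition smooth_on :: "'a::euclidean_space set \<Rightarrow> ('a \<Rightarrow> 'b::real_normed_vector) \<Rightarrow> bool" where
  "smooth_on U f \<longleftrightarrow> (\<forall>k. smooth_k k U f)"

definition Dd :: "('a::real_normed_vector \<Rightarrow> 'b::real_normed_vector) \<Rightarrow> 'a \<Rightarrow> 'a \<Rightarrow> 'b" where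
  "Dd f p X = frechet_derivative f (at p) X"

definition signature_22 :: "(real^4 \<Rightarrow> real^4 \<Rightarrow> real) \<Rightarrow> bool" where
  "signature_22 B \<longleftrightarrow> bilinear B \<and> (\<forall>x y. B x y = B y x) \<and>
     (\<exists>e::nat \<Rightarrow> real^4. inj_on e {..<4} \<and> independent (e ` {..<4}) \<and>
        (\<forall>i<4. \<forall>j<4. B (e i) (e j) = (if i = j then (if i < 2 then 1 else -1) else 0)))"

definition lorentz_form :: "(real^2 \<Rightarrow> real^2 \<Rightarrow> real) \<Rightarrow> bool" where
  "lorentz_form h \<longleftrightarrow> bilinear h \<and> (\<forall>x y. h x y = h y x) \<and>
     (\<exists>e1 e2. h e1 e1 = 1 \<and> h e2 e2 = -1 \<and> h e1 e2 = 0)"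

definition lorentz_metric :: "(real^2) set \<Rightarrow> (real^2 \<Rightarrow> real^2 \<Rightarrow> real^2 \<Rightarrow> real) \<Rightarrow> bool" where
  "lorentz_metric U g \<longleftrightarrow> (\<forall>p\<in>U. lorentz_form (g p)) \<and> (\<forall>X Y. smooth_on U (\<lambda>p. g p X Y))"

text \<open>sigma : U \<rightarrow> W is a smooth nowhere vanishing isotropic lift of an immersion
  phi = [sigma] : U \<rightarrow> Ein^{1,1} (the existence of such a global lift is exactly the
  triviality of phi^* tau). phi is an immersion iff D sigma X is never a multiple of
  sigma for X \<noteq> 0.\<close>
definition isotropic_lift_of_immersion ::
  "(real^4 \<Rightarrow> real^4 \<Rightarrow> real) \<Rightarrow> (real^2) set \<Rightarrow> (real^2 \<Rightarrow> real^4) \<Rightarrow> bool" where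
  "isotropic_lift_of_immersion B U \<sigma> \<longleftrightarrow> smooth_on U \<sigma> \<and>
     (\<forall>p\<in>U. \<sigma> p \<noteq> 0 \<and> B (\<sigma> p) (\<sigma> p) = 0 \<and>
        (\<forall>X. Dd \<sigma> p X \<in> span {\<sigma> p} \<longrightarrow> X = 0))"

definition isotropic_surface_of ::
  "(real^4 \<Rightarrow> real^4 \<Rightarrow> real) \<Rightarrow> (real^2) set \<Rightarrow> (real^2 \<Rightarrow> real^2 \<Rightarrow> real^2 \<Rightarrow> real)
     \<Rightarrow> (real^2 \<Rightarrow> real^4) \<Rightarrow> bool" where
  "isotropic_surface_of B U h \<sigma> \<longleftrightarrow> smooth_on U \<sigma> \<and>
     (\<forall>p\<in>U. B (\<sigma> p) (\<sigma> p) = 0 \<and> (\<forall>X Y. h p X Y = B (Dd \<sigma> p X) (Dd \<sigma> p Y)))"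

definition dual_isotropic ::
  "(real^4 \<Rightarrow> real^4 \<Rightarrow> real) \<Rightarrow> (real^2) set \<Rightarrow> (real^2 \<Rightarrow> real^4) \<Rightarrow> (real^2 \<Rightarrow> real^4) \<Rightarrow> bool" where
  "dual_isotropic B U \<sigma> \<eta> \<longleftrightarrow>
     (\<forall>p\<in>U. B (\<eta> p) (\<sigma> p) = 1 \<and> B (\<eta> p) (\<eta> p) = 0 \<and> (\<forall>X. B (\<eta> p) (Dd \<sigma> p X) = 0))"

definition gradient :: "(real^2 \<Rightarrow> real^2 \<Rightarrow> real^2 \<Rightarrow> real) \<Rightarrow> (real^2 \<Rightarrow> real) \<Rightarrow> real^2 \<Rightarrow> real^2" where
  "gradient g f p = (THE X. \<forall>Y. g p X Y = Dd f p Y)"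

end

(* Since \<sigma>_t = e^(u_t) \<sigma>, the first formula is the chain rule.
   For the second, fix p and a g-orthonormal frame e1, e2 of T_pS.  Then \<sigma>, \<eta>, D\<sigma> e1, D\<sigma> e2
   is a null frame of W, and the three conditions defining the dual of a rescaled surface e^v \<sigma>
   determine it explicitly as  e^(-v) (\<eta> - D\<sigma>(\<nabla>v) - g(\<nabla>v, \<nabla>v)/2 \<sigma>).
   Differentiating at t = 0, where u_0 = 0 and hence \<nabla>u_0 = 0, leaves -u \<eta> - D\<sigma>(d/dt \<nabla>u_t),
   and d/dt \<nabla>u_t = \<nabla>(d/dt u_t) because the mixed second partials of the C^2 function
   (t, p) \<mapsto> u_t(p) commute. *)

theory Submission
  imports Defs
begin

section \<open>Derivatives in coordinates\<close>

lemma Dd_eq: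
  assumes "(f has_derivative f') (at p)"
  shows "Dd f p = f'"
  using frechet_derivative_at[OF assms] by (simp add: Dd_def fun_eq_iff)

lemma has_derivative_zero_on_open:
  assumes "(f has_derivative f') (at p)" "open U" "p \<in> U" "\<And>q. q \<in> U \<Longrightarrow> f q = 0"
  shows "f' = (\<lambda>_. 0)"
proof -
  have "((\<lambda>q. 0) has_derivative f') (at p)"
    using has_derivative_transform_within_open[OF assms(1-3)] assms(4) by simp
  then show ?thesis
    using has_derivative_unique has_derivative_const by blast
qed

lemma has_real_derivative_along_line:
  fixes F :: "'a::real_normed_vector \<Rightarrow> real"
  assumes "(F has_derivative F') (at (a + t *\<^sub>R v))"
  shows "((\<lambda>s. F (a + s *\<^sub>R v)) has_real_derivative F' v) (at t)"
proof -
  have "((\<lambda>s. F (a + s *\<^sub>R v)) has_derivative (\<lambda>s. F' (s *\<^sub>R v))) (at t)"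
    by (rule has_derivative_compose[of "\<lambda>s. a + s *\<^sub>R v" "\<lambda>s. s *\<^sub>R v", OF _ assms])
      (auto intro!: derivative_eq_intros)
  moreover have "(\<lambda>s. F' (s *\<^sub>R v)) = (*) (F' v)"
    using assms by (simp add: has_derivative_bounded_linear linear_simps fun_eq_iff)
  ultimately show ?thesis by (simp add: has_field_derivative_def)
qed

lemma has_derivative_partial_snd:
  assumes "(G has_derivative G') (at (t, q))"
  shows "((\<lambda>q. G (t, q)) has_derivative (\<lambda>e. G' (0, e))) (at q)"
proof -
  have "((\<lambda>q. (t, q)) has_derivative (\<lambda>e. (0, e))) (at q)"
    by (auto intro!: derivative_eq_intros)
  from has_derivative_compose[OF this assms] show ?thesis
    by simp
qed

lemma has_real_derivative_partial_fst:
  fixes G :: "real \<times> 'a::real_normed_vector \<Rightarrow> real"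
  assumes "(G has_derivative G') (at (t, q))"
  shows "((\<lambda>t. G (t, q)) has_real_derivative G' (1, 0)) (at t)"
  using has_real_derivative_along_line[of G G' "(0, q)" t "(1, 0)"] assms by simp

section \<open>Symmetry of second derivatives\<close>

lemma second_difference_mean_value:
  fixes F :: "'a::real_normed_vector \<Rightarrow> real"
  assumes h: "0 < h"
    and box: "\<And>\<tau> s. 0 \<le> \<tau> \<Longrightarrow> \<tau> \<le> h \<Longrightarrow> 0 \<le> s \<Longrightarrow> s \<le> h \<Longrightarrow> x + \<tau> *\<^sub>R v + s *\<^sub>R w \<in> S"
    and F: "\<And>y. y \<in> S \<Longrightarrow> (F has_derivative F' y) (at y)"
    and Fv: "\<And>y. y \<in> S \<Longrightarrow> ((\<lambda>y. F' y v) has_derivative Fv y) (at y)"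
  shows "\<exists>\<tau> s. 0 < \<tau> \<and> \<tau> < h \<and> 0 < s \<and> s < h \<and>
    F (x + h *\<^sub>R v + h *\<^sub>R w) - F (x + h *\<^sub>R v) - F (x + h *\<^sub>R w) + F x
      = h\<^sup>2 * Fv (x + \<tau> *\<^sub>R v + s *\<^sub>R w) w"
proof -
  define G where "G \<tau> = F (x + \<tau> *\<^sub>R v + h *\<^sub>R w) - F (x + \<tau> *\<^sub>R v)" for \<tau>
  have "\<exists>\<tau>>0. \<tau> < h \<and> G h - G 0 = (h - 0) * (F' (x + \<tau> *\<^sub>R v + h *\<^sub>R w) v - F' (x + \<tau> *\<^sub>R v) v)"
  proof (rule MVT2[OF h])
    fix \<tau> assume "0 \<le> \<tau>" "\<tau> \<le> h"
    then have "(x + h *\<^sub>R w) + \<tau> *\<^sub>R v \<in> S" "(x + 0 *\<^sub>R w) + \<tau> *\<^sub>R v \<in> S"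
      using h box[of \<tau> h] box[of \<tau> 0] by (simp_all add: add_ac)
    from this[THEN F, THEN has_real_derivative_along_line]
    have "((\<lambda>\<tau>. F (x + \<tau> *\<^sub>R v + h *\<^sub>R w)) has_real_derivative F' (x + \<tau> *\<^sub>R v + h *\<^sub>R w) v) (at \<tau>)"
      "((\<lambda>\<tau>. F (x + \<tau> *\<^sub>R v)) has_real_derivative F' (x + \<tau> *\<^sub>R v) v) (at \<tau>)"
      by (simp_all add: add_ac)
    then show "(G has_real_derivative F' (x + \<tau> *\<^sub>R v + h *\<^sub>R w) v - F' (x + \<tau> *\<^sub>R v) v) (at \<tau>)"
      unfolding G_def by (rule DERIV_diff)
  qed
  then obtain \<tau> where \<tau>: "0 < \<tau>" "\<tau> < h"
    and G: "G h - G 0 = h * (F' (x + \<tau> *\<^sub>R v + h *\<^sub>R w) v - F' (x + \<tau> *\<^sub>R v + 0 *\<^sub>R w) v)"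
    by auto
  have "\<exists>s>0. s < h \<and> F' (x + \<tau> *\<^sub>R v + h *\<^sub>R w) v - F' (x + \<tau> *\<^sub>R v + 0 *\<^sub>R w) v
      = (h - 0) * Fv (x + \<tau> *\<^sub>R v + s *\<^sub>R w) w"
  proof (rule MVT2[OF h])
    fix s assume "0 \<le> s" "s \<le> h"
    then show "((\<lambda>s. F' (x + \<tau> *\<^sub>R v + s *\<^sub>R w) v) has_real_derivative Fv (x + \<tau> *\<^sub>R v + s *\<^sub>R w) w) (at s)"
      using \<tau> box[of \<tau> s] Fv[THEN has_real_derivative_along_line, of "x + \<tau> *\<^sub>R v" s w]
      by simp
  qed
  then obtain s where "0 < s" "s < h"
    "F' (x + \<tau> *\<^sub>R v + h *\<^sub>R w) v - F' (x + \<tau> *\<^sub>R v + 0 *\<^sub>R w) v = h * Fv (x + \<tau> *\<^sub>R v + s *\<^sub>R w) w"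
    by auto
  with \<tau> G show ?thesis
    unfolding G_def by (intro exI[of _ \<tau>] exI[of _ s]) (auto simp: power2_eq_square)
qed

lemma parallelogram_in_ball:
  fixes x v w :: "'a::real_normed_vector"
  assumes "\<delta> > 0"
  obtains h where "h > 0"
    "\<And>\<tau> s. 0 \<le> \<tau> \<Longrightarrow> \<tau> \<le> h \<Longrightarrow> 0 \<le> s \<Longrightarrow> s \<le> h \<Longrightarrow> dist (x + \<tau> *\<^sub>R v + s *\<^sub>R w) x < \<delta>"
proof
  define N where "N = norm v + norm w"
  have N: "N + 1 > 0"
    by (simp add: N_def add_nonneg_pos)
  define h where "h = \<delta> / (2 * (N + 1))"
  show "h > 0"
    using N assms by (simp add: h_def)
  have "h * (N + 1) = \<delta> / 2"
    using N by (simp add: h_def field_simps)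
  then have hN: "h * N < \<delta>"
    using \<open>h > 0\<close> assms by (simp add: distrib_left)
  fix \<tau> s
  assume "0 \<le> \<tau>" "\<tau> \<le> h" "0 \<le> s" "s \<le> h"
  then have "dist (x + \<tau> *\<^sub>R v + s *\<^sub>R w) x \<le> h * N"
    using norm_triangle_ineq[of "\<tau> *\<^sub>R v" "s *\<^sub>R w"] mult_right_mono[of \<tau> h "norm v"]
      mult_right_mono[of s h "norm w"]
    by (simp add: dist_norm N_def distrib_left)
  with hN show "dist (x + \<tau> *\<^sub>R v + s *\<^sub>R w) x < \<delta>"
    by simp
qed

lemma symmetric_second_derivative:
  fixes F :: "'a::real_normed_vector \<Rightarrow> real"
  assumes S: "open S" "x \<in> S"
    and F: "\<And>y. y \<in> S \<Longrightarrow> (F has_derivative F' y) (at y)"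
    and F': "\<And>v y. y \<in> S \<Longrightarrow> ((\<lambda>y. F' y v) has_derivative F'' v y) (at y)"
    and F'': "\<And>v w. continuous_on S (\<lambda>y. F'' v y w)"
  shows "F'' v x w = F'' w x v"
proof -
  have eps: "\<bar>F'' v x w - F'' w x v\<bar> \<le> 2 * e" if e: "e > 0" for e
  proof -
    have "((\<lambda>y. F'' v y w) \<longlongrightarrow> F'' v x w) (nhds x)" "((\<lambda>y. F'' w y v) \<longlongrightarrow> F'' w x v) (nhds x)"
      using F'' S tendsto_at_iff_tendsto_nhds[of "\<lambda>y. F'' v y w" x]
        tendsto_at_iff_tendsto_nhds[of "\<lambda>y. F'' w y v" x]
      by (simp_all add: continuous_on_eq_continuous_at isCont_def)
    then have "\<forall>\<^sub>F y in nhds x. y \<in> S \<and> dist (F'' v y w) (F'' v x w) < e \<and> dist (F'' w y v) (F'' w x v) < e"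
      using e S by (auto simp: eventually_conj_iff intro!: tendstoD eventually_nhds_in_open)
    then obtain \<delta> where \<delta>: "\<delta> > 0" and near: "\<And>y. dist y x < \<delta> \<Longrightarrow>
        y \<in> S \<and> dist (F'' v y w) (F'' v x w) < e \<and> dist (F'' w y v) (F'' w x v) < e"
      unfolding eventually_nhds_metric by blast
    obtain h where h: "h > 0"
      and close: "\<And>\<tau> s. 0 \<le> \<tau> \<Longrightarrow> \<tau> \<le> h \<Longrightarrow> 0 \<le> s \<Longrightarrow> s \<le> h \<Longrightarrow>
        dist (x + \<tau> *\<^sub>R v + s *\<^sub>R w) x < \<delta>"
      using parallelogram_in_ball[OF \<delta>] by blast
    have box_vw: "x + \<tau> *\<^sub>R v + s *\<^sub>R w \<in> S"
      and box_wv: "x + \<tau> *\<^sub>R w + s *\<^sub>R v \<in> S"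
      if "0 \<le> \<tau>" "\<tau> \<le> h" "0 \<le> s" "s \<le> h" for \<tau> s
      using near[OF close[OF that]] near[OF close[of s \<tau>]] that by (simp_all add: add_ac)
    \<comment> \<open>Both mixed partials are h^-2 times the same second difference, at points near x.\<close>
    obtain \<tau>1 s1 where 1: "0 < \<tau>1" "\<tau>1 < h" "0 < s1" "s1 < h"
      "F (x + h *\<^sub>R v + h *\<^sub>R w) - F (x + h *\<^sub>R v) - F (x + h *\<^sub>R w) + F x
         = h\<^sup>2 * F'' v (x + \<tau>1 *\<^sub>R v + s1 *\<^sub>R w) w"
      using second_difference_mean_value[OF h box_vw F F'[where v=v]] by blast
    obtain \<tau>2 s2 where 2: "0 < \<tau>2" "\<tau>2 < h" "0 < s2" "s2 < h"
      "F (x + h *\<^sub>R w + h *\<^sub>R v) - F (x + h *\<^sub>R w) - F (x + h *\<^sub>R v) + F x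
         = h\<^sup>2 * F'' w (x + \<tau>2 *\<^sub>R w + s2 *\<^sub>R v) v"
      using second_difference_mean_value[OF h box_wv F F'[where v=w]] by blast
    have "h\<^sup>2 * F'' v (x + \<tau>1 *\<^sub>R v + s1 *\<^sub>R w) w = h\<^sup>2 * F'' w (x + \<tau>2 *\<^sub>R w + s2 *\<^sub>R v) v"
      using 1(5) 2(5) by (simp add: algebra_simps)
    then have "F'' v (x + \<tau>1 *\<^sub>R v + s1 *\<^sub>R w) w = F'' w (x + \<tau>2 *\<^sub>R w + s2 *\<^sub>R v) v"
      using h by simp
    moreover have "dist (F'' v (x + \<tau>1 *\<^sub>R v + s1 *\<^sub>R w) w) (F'' v x w) < e"
      using near[OF close] 1 by simp
    moreover have "dist (F'' w (x + \<tau>2 *\<^sub>R w + s2 *\<^sub>R v) v) (F'' w x v) < e"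
      using near[OF close[of s2 \<tau>2]] 2 by (simp add: add_ac)
    ultimately show ?thesis
      by (simp add: dist_real_def)
  qed
  have "\<bar>F'' v x w - F'' w x v\<bar> \<le> 0"
  proof (rule field_le_epsilon)
    fix e :: real
    assume "0 < e"
    then show "\<bar>F'' v x w - F'' w x v\<bar> \<le> 0 + e"
      using eps[of "e / 2"] by simp
  qed
  then show ?thesis
    by simp
qed

lemma C2_family_mixed_partials:
  fixes u :: "real \<Rightarrow> 'a::euclidean_space \<Rightarrow> real"
  assumes T: "open T" "t0 \<in> T" and U: "open U" "p \<in> U"
    and u: "smooth_k 2 (T \<times> U) (\<lambda>(t, q). u t q)"
  obtains du A where
    "\<And>t. t \<in> T \<Longrightarrow> (u t has_derivative du t) (at p)"
    "((\<lambda>q. deriv (\<lambda>t. u t q) t0) has_derivative A) (at p)"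
    "\<And>X. ((\<lambda>t. du t X) has_real_derivative A X) (at t0)"
    "((\<lambda>t. u t p) has_real_derivative deriv (\<lambda>t. u t p) t0) (at t0)"
proof -
  have TU: "open (T \<times> U)" "(t0, p) \<in> T \<times> U"
    using T U by (auto simp: open_Times)
  obtain F' where F': "\<And>x. x \<in> T \<times> U \<Longrightarrow> ((\<lambda>(t, q). u t q) has_derivative F' x) (at x)"
    and F'_C1: "\<forall>v. smooth_k (Suc 0) (T \<times> U) (\<lambda>x. F' x v)"
    using u by (auto simp: numeral_2_eq_2)
  obtain F'' where F'': "\<And>v x. x \<in> T \<times> U \<Longrightarrow> ((\<lambda>x. F' x v) has_derivative F'' v x) (at x)"
    and F''_cont: "\<And>v w. continuous_on (T \<times> U) (\<lambda>x. F'' v x w)"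
  proof -
    have "\<forall>v. \<exists>Fv. (\<forall>x\<in>T \<times> U. ((\<lambda>x. F' x v) has_derivative Fv x) (at x)) \<and>
        (\<forall>w. continuous_on (T \<times> U) (\<lambda>x. Fv x w))"
      using F'_C1 by simp
    then show thesis
      using that by metis
  qed
  have F'_case: "((\<lambda>x. u (fst x) (snd x)) has_derivative F' x) (at x)" if "x \<in> T \<times> U" for x
    using F'[OF that] by (simp add: case_prod_beta')
  define du where "du t e = F' (t, p) (0, e)" for t e
  define A where "A e = F'' (1, 0) (t0, p) (0, e)" for e
  have dt: "((\<lambda>t. u t q) has_real_derivative F' (t, q) (1, 0)) (at t)" if "t \<in> T" "q \<in> U" for t q
    using has_real_derivative_partial_fst[OF F'_case] that by simp
  show thesis
  proof
    show "(u t has_derivative du t) (at p)" if "t \<in> T" for t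
      using has_derivative_partial_snd[OF F'_case] that U unfolding du_def by simp
    have "((\<lambda>q. F' (t0, q) (1, 0)) has_derivative A) (at p)"
      unfolding A_def by (rule has_derivative_partial_snd[OF F''[OF TU(2)]])
    then show "((\<lambda>q. deriv (\<lambda>t. u t q) t0) has_derivative A) (at p)"
      by (rule has_derivative_transform_within_open[OF _ U]) (metis T(2) dt DERIV_imp_deriv)
    show "((\<lambda>t. du t X) has_real_derivative A X) (at t0)" for X
      using has_real_derivative_partial_fst[OF F''[OF TU(2), of "(0, X)"]]
        symmetric_second_derivative[OF TU F'_case F'' F''_cont, of "(0, X)" "(1, 0)"]
      by (simp add: du_def A_def)
    show "((\<lambda>t. u t p) has_real_derivative deriv (\<lambda>t. u t p) t0) (at t0)"
      using dt[OF T(2) U(2)] DERIV_imp_deriv by metis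
  qed
qed

section \<open>Frames and metric duals\<close>

lemma bilinear_sum_scaleR_left:
  assumes "bilinear B"
  shows "B (\<Sum>i\<in>I. c i *\<^sub>R e i) y = (\<Sum>i\<in>I. c i * B (e i) y)"
proof -
  have lin: "linear (\<lambda>x. B x y)"
    using assms by (simp add: bilinear_def)
  show ?thesis
    by (simp add: linear_sum[OF lin] linear_scale[OF lin] o_def)
qed

lemma expansion_in_dual_family:
  fixes B :: "'a::euclidean_space \<Rightarrow> 'a \<Rightarrow> real"
  assumes B: "bilinear B" and I: "finite I" "card I = DIM('a)"
    and dual: "\<And>i j. i \<in> I \<Longrightarrow> j \<in> I \<Longrightarrow> B (e i) (f j) = (if i = j then 1 else 0)"
  shows "x = (\<Sum>i\<in>I. B x (f i) *\<^sub>R e i)"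
proof -
  have coeff: "B (\<Sum>i\<in>I. c i *\<^sub>R e i) (f j) = c j" if "j \<in> I" for c j
  proof -
    have "B (\<Sum>i\<in>I. c i *\<^sub>R e i) (f j) = (\<Sum>i\<in>I. c i * (if i = j then 1 else 0))"
      using that by (simp add: bilinear_sum_scaleR_left[OF B] dual)
    also have "\<dots> = c j"
      using that I by (simp add: if_distrib[of "(*) _"] cong: if_cong)
    finally show ?thesis .
  qed
  have inj: "inj_on e I"
  proof (rule inj_onI)
    fix i j assume "i \<in> I" "j \<in> I" "e i = e j"
    then have "B (e i) (f j) = 1"
      using dual[of j j] by simp
    then show "i = j"
      using dual[of i j] \<open>i \<in> I\<close> \<open>j \<in> I\<close> by (simp split: if_splits)
  qed
  have "independent (e ` I)"
    unfolding independent_explicit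
  proof (intro conjI allI impI ballI)
    show "finite (e ` I)"
      using I by simp
    fix k v
    assume "(\<Sum>v\<in>e ` I. k v *\<^sub>R v) = 0" "v \<in> e ` I"
    then obtain j where "j \<in> I" "v = e j" "(\<Sum>i\<in>I. k (e i) *\<^sub>R e i) = 0"
      by (auto simp: sum.reindex[OF inj])
    then show "k v = 0"
      using coeff[of j "k \<circ> e"] B by (simp add: bilinear_lzero)
  qed
  moreover have "card (e ` I) = DIM('a)"
    using I inj by (simp add: card_image)
  ultimately have "x \<in> span (e ` I)"
    using card_ge_dim_independent[of "e ` I" UNIV] by auto
  then obtain c where "x = (\<Sum>i\<in>I. c i *\<^sub>R e i)"
    using I by (auto simp: span_finite sum.reindex[OF inj])
  then show ?thesis
    using coeff by (simp cong: sum.cong)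
qed

lemma null_frame_expansion:
  fixes B :: "'a::euclidean_space \<Rightarrow> 'a \<Rightarrow> real"
  assumes dim: "DIM('a) = 4" and B: "bilinear B" "\<And>x y. B x y = B y x"
    and "B s s = 0" "B s \<eta> = 1" "B \<eta> \<eta> = 0" "B s a = 0" "B s b = 0" "B \<eta> a = 0" "B \<eta> b = 0"
      "B a a = 1" "B a b = 0" "B b b = -1"
  shows "x = B x \<eta> *\<^sub>R s + B x s *\<^sub>R \<eta> + B x a *\<^sub>R a - B x b *\<^sub>R b"
proof -
  have "x = (\<Sum>i<4. B x ([\<eta>, s, a, -b] ! i) *\<^sub>R [s, \<eta>, a, b] ! i)"
  proof (rule expansion_in_dual_family[OF B(1)])
    fix i j :: nat
    assume "i \<in> {..<4}" "j \<in> {..<4}"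
    then have "i \<in> {0, 1, 2, 3}" "j \<in> {0, 1, 2, 3}"
      by auto
    then show "B ([s, \<eta>, a, b] ! i) ([\<eta>, s, a, -b] ! j) = (if i = j then 1 else 0)"
      using assms by (auto simp: bilinear_rneg)
  qed (simp_all add: dim)
  then show ?thesis
    using B(1) by (simp add: numeral_eq_Suc bilinear_rneg)
qed

lemma lorentz_frame_expansion:
  fixes h :: "'a::euclidean_space \<Rightarrow> 'a \<Rightarrow> real"
  assumes dim: "DIM('a) = 2" and h: "bilinear h" "\<And>x y. h x y = h y x" and "h a a = 1" "h a b = 0" "h b b = -1"
  shows "x = h x a *\<^sub>R a - h x b *\<^sub>R b"
proof -
  have "x = (\<Sum>i<2. h x ([a, -b] ! i) *\<^sub>R [a, b] ! i)"
  proof (rule expansion_in_dual_family[OF h(1)])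
    fix i j :: nat
    assume "i \<in> {..<2}" "j \<in> {..<2}"
    then have "i \<in> {0, 1}" "j \<in> {0, 1}"
      by auto
    then show "h ([a, b] ! i) ([a, -b] ! j) = (if i = j then 1 else 0)"
      using assms by (auto simp: bilinear_rneg)
  qed (simp_all add: dim)
  then show ?thesis
    using h(1) by (simp add: numeral_eq_Suc bilinear_rneg)
qed

lemma lorentz_frameE:
  assumes "lorentz_form h"
  obtains a b where "h a a = 1" "h a b = 0" "h b b = -1"
  using assms unfolding lorentz_form_def by blast

definition metric_dual :: "('a \<Rightarrow> 'a \<Rightarrow> real) \<Rightarrow> ('a \<Rightarrow> real) \<Rightarrow> 'a" where
  "metric_dual h A = (THE X. \<forall>Y. h X Y = A Y)"

lemma gradient_eq_metric_dual: "gradient g f p = metric_dual (g p) (Dd f p)"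
  by (simp add: gradient_def metric_dual_def)

lemma metric_dual_in_lorentz_frame:
  fixes h :: "real^2 \<Rightarrow> real^2 \<Rightarrow> real"
  assumes h: "lorentz_form h" and frame: "h a a = 1" "h a b = 0" "h b b = -1" and A: "linear A"
  shows "metric_dual h A = A a *\<^sub>R a - A b *\<^sub>R b"
    and "h (metric_dual h A) Y = A Y"
proof -
  have bil: "bilinear h" and sym: "\<And>x y. h x y = h y x"
    using h by (auto simp: lorentz_form_def)
  have expand: "x = h x a *\<^sub>R a - h x b *\<^sub>R b" for x
    by (rule lorentz_frame_expansion[OF _ bil sym frame]) simp
  have dual: "h (A a *\<^sub>R a - A b *\<^sub>R b) Y = A Y" for Y
  proof -
    have "A Y = A (h Y a *\<^sub>R a - h Y b *\<^sub>R b)"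
      by (subst expand) simp
    also have "\<dots> = h Y a * A a - h Y b * A b"
      using A by (simp add: linear_diff linear_scale)
    finally have "A Y = h Y a * A a - h Y b * A b" .
    then show ?thesis
      using bil sym[of Y] by (simp add: bilinear_lsub bilinear_lmul)
  qed
  show "metric_dual h A = A a *\<^sub>R a - A b *\<^sub>R b"
    unfolding metric_dual_def
  proof (rule the_equality)
    fix X
    assume "\<forall>Y. h X Y = A Y"
    then show "X = A a *\<^sub>R a - A b *\<^sub>R b"
      by (subst expand) simp
  qed (use dual in simp)
  with dual show "h (metric_dual h A) Y = A Y"
    by simp
qed

lemma metric_dual_eq:
  fixes h :: "real^2 \<Rightarrow> real^2 \<Rightarrow> real"
  assumes "lorentz_form h" "linear A"
  shows "h (metric_dual h A) Y = A Y"
  using assms by (metis lorentz_frameE metric_dual_in_lorentz_frame(2))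

lemma metric_dual_zero:
  fixes h :: "real^2 \<Rightarrow> real^2 \<Rightarrow> real"
  assumes "lorentz_form h"
  shows "metric_dual h (\<lambda>_. 0) = 0"
proof -
  obtain a b where "h a a = 1" "h a b = 0" "h b b = -1"
    using assms by (rule lorentz_frameE)
  from metric_dual_in_lorentz_frame(1)[OF assms this] show ?thesis
    by (simp add: linear_zero)
qed

lemma has_vector_derivative_metric_dual:
  fixes h :: "real^2 \<Rightarrow> real^2 \<Rightarrow> real"
  assumes h: "lorentz_form h" and T: "open T" "t0 \<in> T"
    and c: "\<And>t. t \<in> T \<Longrightarrow> linear (c t)" and A: "linear A"
    and c': "\<And>Y. ((\<lambda>t. c t Y) has_real_derivative A Y) (at t0)"
  shows "((\<lambda>t. metric_dual h (c t)) has_vector_derivative metric_dual h A) (at t0)"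
proof -
  obtain a b where frame: "h a a = 1" "h a b = 0" "h b b = -1"
    using h by (rule lorentz_frameE)
  have "((\<lambda>t. c t a *\<^sub>R a - c t b *\<^sub>R b) has_vector_derivative A a *\<^sub>R a - A b *\<^sub>R b) (at t0)"
    using c'[of a] c'[of b]
    by (auto intro!: derivative_eq_intros)
  then show ?thesis
    unfolding metric_dual_in_lorentz_frame(1)[OF h frame A]
    by (rule has_vector_derivative_transform_within_open[OF _ T])
      (simp add: metric_dual_in_lorentz_frame(1)[OF h frame] c)
qed

section \<open>Dual isotropic surfaces under conformal change\<close>

lemma isotropic_surface_has_derivative:
  assumes "isotropic_surface_of B U h \<sigma>" "p \<in> U"
  shows "(\<sigma> has_derivative Dd \<sigma> p) (at p)"
proof -
  have "smooth_k (Suc 0) U \<sigma>"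
    using assms(1) by (simp add: isotropic_surface_of_def smooth_on_def)
  then obtain L where "(\<sigma> has_derivative L) (at p)"
    using assms(2) by auto
  then show ?thesis
    by (simp add: Dd_eq)
qed

lemma isotropic_orthogonal_to_differential:
  fixes B :: "'b::euclidean_space \<Rightarrow> 'b \<Rightarrow> real" and \<sigma> :: "'a::euclidean_space \<Rightarrow> 'b"
  assumes B: "bilinear B" "\<And>x y. B x y = B y x" and U: "open U" "p \<in> U"
    and iso: "\<And>q. q \<in> U \<Longrightarrow> B (\<sigma> q) (\<sigma> q) = 0"
    and \<sigma>: "(\<sigma> has_derivative L) (at p)"
  shows "B (\<sigma> p) (L X) = 0"
proof -
  have "bounded_bilinear B"
    using B(1) by (simp add: bilinear_conv_bounded_bilinear)
  from bounded_bilinear.FDERIV[OF this \<sigma> \<sigma>]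
  have "((\<lambda>q. B (\<sigma> q) (\<sigma> q)) has_derivative (\<lambda>X. B (\<sigma> p) (L X) + B (L X) (\<sigma> p))) (at p)" .
  then have "((\<lambda>q. 0) has_derivative (\<lambda>X. B (\<sigma> p) (L X) + B (L X) (\<sigma> p))) (at p)"
    by (rule has_derivative_transform_within_open[OF _ U]) (simp add: iso)
  then have "(\<lambda>X. B (\<sigma> p) (L X) + B (L X) (\<sigma> p)) = (\<lambda>X. 0)"
    using has_derivative_unique has_derivative_const by blast
  then have "B (\<sigma> p) (L X) + B (L X) (\<sigma> p) = 0"
    by metis
  then show ?thesis
    using B(2)[of "L X" "\<sigma> p"] by simp
qed

lemma isotropic_vector_from_pairings:
  fixes B :: "real^4 \<Rightarrow> real^4 \<Rightarrow> real" and L :: "real^2 \<Rightarrow> real^4"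
    and h :: "real^2 \<Rightarrow> real^2 \<Rightarrow> real"
  assumes B: "bilinear B" "\<And>x y. B x y = B y x" and h: "lorentz_form h" and L: "linear L"
    and hL: "\<And>X Y. h X Y = B (L X) (L Y)"
    and s: "B s s = 0" "\<And>X. B s (L X) = 0"
    and \<eta>: "B \<eta> s = 1" "B \<eta> \<eta> = 0" "\<And>X. B \<eta> (L X) = 0"
    and E: "B E s = k" "\<And>Y. B E (L Y) = - k * h X Y" "B E E = 0" and k: "k \<noteq> 0"
  shows "E = k *\<^sub>R (\<eta> - L X - (h X X / 2) *\<^sub>R s)"
proof -
  obtain a b where frame: "h a a = 1" "h a b = 0" "h b b = -1"
    using h by (rule lorentz_frameE)
  have "bilinear h" "\<And>x y. h x y = h y x"
    using h by (auto simp: lorentz_form_def)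
  then have "X = h X a *\<^sub>R a - h X b *\<^sub>R b"
    using frame by (intro lorentz_frame_expansion) simp_all
  from arg_cong[where f = L, OF this]
  have LX: "L X = h X a *\<^sub>R L a - h X b *\<^sub>R L b"
    using L by (simp add: linear_diff linear_scale)
  \<comment> \<open>All components of E in the null frame are known except m; isotropy of E determines m.\<close>
  define m where "m = B E \<eta>"
  have "E = B E \<eta> *\<^sub>R s + B E s *\<^sub>R \<eta> + B E (L a) *\<^sub>R L a - B E (L b) *\<^sub>R L b"
    by (rule null_frame_expansion) (use B s \<eta> frame in \<open>simp_all flip: hL\<close>)
  then have E_expand: "E = m *\<^sub>R s + k *\<^sub>R \<eta> - k *\<^sub>R L X"
    by (simp add: m_def E LX algebra_simps)
  have "0 = B E (m *\<^sub>R s + k *\<^sub>R \<eta> - k *\<^sub>R L X)"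
    using E(3) E_expand by simp
  also have "\<dots> = k * (2 * m + k * h X X)"
    using B(1) by (simp add: bilinear_radd bilinear_rsub bilinear_rmul E m_def algebra_simps)
  finally have "2 * m + k * h X X = 0"
    using k by simp
  then have "m = - k * h X X / 2"
    by linarith
  with E_expand show ?thesis
    by (simp add: algebra_simps)
qed

lemma dual_isotropic_conformal_rescaling:
  fixes B :: "real^4 \<Rightarrow> real^4 \<Rightarrow> real" and \<sigma> \<sigma>' \<eta> \<eta>' :: "real^2 \<Rightarrow> real^4"
    and h :: "real^2 \<Rightarrow> real^2 \<Rightarrow> real^2 \<Rightarrow> real" and v :: "real^2 \<Rightarrow> real"
  assumes B: "bilinear B" "\<And>x y. B x y = B y x" and U: "open U" "p \<in> U"
    and \<sigma>: "isotropic_surface_of B U h \<sigma>" and h: "lorentz_form (h p)"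
    and \<eta>: "dual_isotropic B U \<sigma> \<eta>"
    and v: "(v has_derivative dv) (at p)"
    and \<sigma>': "\<And>q. q \<in> U \<Longrightarrow> \<sigma>' q = exp (v q) *\<^sub>R \<sigma> q"
    and \<eta>': "dual_isotropic B U \<sigma>' \<eta>'"
  defines "X \<equiv> metric_dual (h p) dv"
  shows "\<eta>' p = exp (- v p) *\<^sub>R (\<eta> p - Dd \<sigma> p X - (h p X X / 2) *\<^sub>R \<sigma> p)"
proof -
  define L where "L = Dd \<sigma> p"
  have L: "(\<sigma> has_derivative L) (at p)"
    unfolding L_def by (rule isotropic_surface_has_derivative[OF \<sigma> U(2)])
  have "linear L" "linear dv"
    using L v by (simp_all add: has_derivative_linear)
  have hL: "\<And>X Y. h p X Y = B (L X) (L Y)" and iso: "\<And>q. q \<in> U \<Longrightarrow> B (\<sigma> q) (\<sigma> q) = 0"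
    using \<sigma> U(2) by (auto simp: isotropic_surface_of_def L_def)
  have \<sigma>L: "B (\<sigma> p) (L Y) = 0" for Y
    by (rule isotropic_orthogonal_to_differential[OF B U iso L])
  have \<eta>p: "B (\<eta> p) (\<sigma> p) = 1" "B (\<eta> p) (\<eta> p) = 0" "B (\<eta> p) (L Y) = 0" for Y
    using \<eta> U(2) by (auto simp: dual_isotropic_def L_def)
  have "((\<lambda>q. exp (v q) *\<^sub>R \<sigma> q) has_derivative
      (\<lambda>Y. exp (v p) *\<^sub>R L Y + (exp (v p) * dv Y) *\<^sub>R \<sigma> p)) (at p)"
    by (auto intro!: derivative_eq_intros v L simp: algebra_simps)
  then have "(\<sigma>' has_derivative (\<lambda>Y. exp (v p) *\<^sub>R L Y + (exp (v p) * dv Y) *\<^sub>R \<sigma> p)) (at p)"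
    by (rule has_derivative_transform_within_open[OF _ U]) (simp add: \<sigma>')
  then have Dd\<sigma>': "Dd \<sigma>' p Y = exp (v p) *\<^sub>R L Y + (exp (v p) * dv Y) *\<^sub>R \<sigma> p" for Y
    by (simp add: Dd_eq)
  define E where "E = \<eta>' p"
  have E: "B E (\<sigma>' p) = 1" "B E E = 0" "B E (Dd \<sigma>' p Y) = 0" for Y
    using \<eta>' U(2) by (auto simp: dual_isotropic_def E_def)
  have E\<sigma>: "B E (\<sigma> p) = exp (- v p)"
    using E(1) B(1) by (simp add: \<sigma>' U(2) bilinear_rmul exp_minus field_simps)
  have EL: "B E (L Y) = - exp (- v p) * h p X Y" for Y
  proof -
    have "exp (v p) * (B E (L Y) + dv Y * B E (\<sigma> p)) = 0"
      using E(3)[of Y] B(1) by (simp add: Dd\<sigma>' bilinear_radd bilinear_rmul algebra_simps)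
    then have "B E (L Y) = - dv Y * exp (- v p)"
      by (simp add: E\<sigma>)
    then show ?thesis
      using metric_dual_eq[OF h \<open>linear dv\<close>] by (simp add: X_def)
  qed
  show ?thesis
    unfolding E_def[symmetric] L_def[symmetric]
    by (rule isotropic_vector_from_pairings[OF B h \<open>linear L\<close> hL iso[OF U(2)] \<sigma>L
          \<eta>p E\<sigma> EL E(2)]) simp
qed

lemma has_vector_derivative_rescaled_dual_formula:
  fixes L :: "'a::euclidean_space \<Rightarrow> 'b::euclidean_space" and q :: "'a \<Rightarrow> 'a \<Rightarrow> real"
  assumes w: "(w has_real_derivative w') (at 0)" "w 0 = 0"
    and Z: "(Z has_vector_derivative Z') (at 0)" "Z 0 = 0"
    and L: "linear L" and q: "bilinear q"
  shows "((\<lambda>t. exp (- w t) *\<^sub>R (\<eta> - L (Z t) - (q (Z t) (Z t) / 2) *\<^sub>R s))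
    has_vector_derivative - (w' *\<^sub>R \<eta>) - L Z') (at 0)"
proof -
  have LZ: "((\<lambda>t. L (Z t)) has_vector_derivative L Z') (at 0)"
    using L Z(1) by (simp add: linear_conv_bounded_linear bounded_linear.has_vector_derivative)
  have "((\<lambda>t. q (Z t) (Z t)) has_vector_derivative q (Z 0) Z' + q Z' (Z 0)) (at 0)"
    using q Z(1) by (simp add: bilinear_conv_bounded_bilinear bounded_bilinear.has_vector_derivative)
  then have qZ: "((\<lambda>t. q (Z t) (Z t)) has_real_derivative 0) (at 0)"
    using q Z(2) by (simp add: bilinear_lzero bilinear_rzero has_real_derivative_iff_has_vector_derivative)
  show ?thesis
    by (rule derivative_eq_intros w LZ qZ refl | simp add: w Z L linear_0 q bilinear_lzero)+
qed

lemma dual_isotropic_conformal_variation: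
  fixes B :: "real^4 \<Rightarrow> real^4 \<Rightarrow> real" and \<sigma> \<eta> :: "real^2 \<Rightarrow> real^4"
    and \<sigma>' \<eta>' :: "real \<Rightarrow> real^2 \<Rightarrow> real^4"
    and h :: "real^2 \<Rightarrow> real^2 \<Rightarrow> real^2 \<Rightarrow> real" and v :: "real \<Rightarrow> real^2 \<Rightarrow> real"
  assumes B: "bilinear B" "\<And>x y. B x y = B y x" and U: "open U" "p \<in> U" and T: "open T" "0 \<in> T"
    and \<sigma>: "isotropic_surface_of B U h \<sigma>" and h: "lorentz_form (h p)"
    and \<eta>: "dual_isotropic B U \<sigma> \<eta>"
    and v: "\<And>t. t \<in> T \<Longrightarrow> (v t has_derivative dv t) (at p)" "\<And>q. q \<in> U \<Longrightarrow> v 0 q = 0"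
    and v': "((\<lambda>t. v t p) has_real_derivative w') (at 0)"
    and dv': "\<And>X. ((\<lambda>t. dv t X) has_real_derivative A X) (at 0)" "linear A"
    and \<sigma>': "\<And>t q. t \<in> T \<Longrightarrow> q \<in> U \<Longrightarrow> \<sigma>' t q = exp (v t q) *\<^sub>R \<sigma> q"
    and \<eta>': "\<And>t. t \<in> T \<Longrightarrow> dual_isotropic B U (\<sigma>' t) (\<eta>' t)"
  shows "((\<lambda>t. \<eta>' t p) has_vector_derivative - (w' *\<^sub>R \<eta> p) - Dd \<sigma> p (metric_dual (h p) A)) (at 0)"
proof -
  define X where "X t = metric_dual (h p) (dv t)" for t
  have \<eta>'_eq: "\<eta>' t p = exp (- v t p) *\<^sub>R (\<eta> p - Dd \<sigma> p (X t) - (h p (X t) (X t) / 2) *\<^sub>R \<sigma> p)"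
    if "t \<in> T" for t
    unfolding X_def by (rule dual_isotropic_conformal_rescaling[OF B U \<sigma> h \<eta> v(1) \<sigma>' \<eta>']) (use that in simp_all)
  have X': "(X has_vector_derivative metric_dual (h p) A) (at 0)"
    unfolding X_def
    by (rule has_vector_derivative_metric_dual[OF h T _ dv'(2) dv'(1)]) (use v(1) has_derivative_linear in blast)
  have "dv 0 = (\<lambda>_. 0)"
    by (rule has_derivative_zero_on_open[OF v(1)[OF T(2)] U v(2)])
  then have X0: "X 0 = 0"
    by (simp add: X_def metric_dual_zero[OF h])
  have "linear (Dd \<sigma> p)"
    using isotropic_surface_has_derivative[OF \<sigma> U(2)] by (rule has_derivative_linear)
  moreover have "bilinear (h p)"
    using h by (simp add: lorentz_form_def)
  ultimately have "((\<lambda>t. exp (- v t p) *\<^sub>R (\<eta> p - Dd \<sigma> p (X t) - (h p (X t) (X t) / 2) *\<^sub>R \<sigma> p))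
      has_vector_derivative - (w' *\<^sub>R \<eta> p) - Dd \<sigma> p (metric_dual (h p) A)) (at 0)"
    using v(2)[OF U(2)] by (intro has_vector_derivative_rescaled_dual_formula[OF v' _ X' X0])
  then show ?thesis
    by (rule has_vector_derivative_transform_within_open[OF _ T]) (simp add: \<eta>'_eq)
qed

theorem mainTheorem18:
  fixes B :: "real^4 \<Rightarrow> real^4 \<Rightarrow> real"
    and U :: "(real^2) set" and T :: "real set"
    and g :: "real^2 \<Rightarrow> real^2 \<Rightarrow> real^2 \<Rightarrow> real"
    and u :: "real \<Rightarrow> real^2 \<Rightarrow> real"
    and \<sigma>t \<eta>t :: "real \<Rightarrow> real^2 \<Rightarrow> real^4"
    and udot :: "real^2 \<Rightarrow> real"
  assumes B: "signature_22 B"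
    and U: "open U" and T: "open T" "0 \<in> T"
    and imm: "isotropic_lift_of_immersion B U (\<sigma>t 0)"
    and g: "lorentz_metric U g"
    and u_smooth: "smooth_on (T \<times> U) (\<lambda>(t, p). u t p)"
    and u0: "\<forall>p\<in>U. u 0 p = 0"
    and udot: "udot = (\<lambda>p. deriv (\<lambda>t. u t p) 0)"
    and \<sigma>t: "\<forall>t\<in>T. isotropic_surface_of B U (\<lambda>p X Y. exp (2 * u t p) * g p X Y) (\<sigma>t t)"
    and \<sigma>t_eq: "\<forall>t\<in>T. \<forall>p\<in>U. \<sigma>t t p = exp (u t p) *\<^sub>R \<sigma>t 0 p"
    and \<eta>t: "\<forall>t\<in>T. dual_isotropic B U (\<sigma>t t) (\<eta>t t)"
  shows "\<forall>p\<in>U.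
     ((\<lambda>t. \<sigma>t t p) has_vector_derivative (udot p *\<^sub>R \<sigma>t 0 p)) (at 0) \<and>
     ((\<lambda>t. \<eta>t t p) has_vector_derivative
        (- (udot p *\<^sub>R \<eta>t 0 p) - Dd (\<sigma>t 0) p (gradient g udot p))) (at 0)"
proof (intro ballI conjI)
  fix p
  assume p: "p \<in> U"
  have B': "bilinear B" "\<And>x y. B x y = B y x"
    using B by (auto simp: signature_22_def)
  obtain du A where du: "\<And>t. t \<in> T \<Longrightarrow> (u t has_derivative du t) (at p)"
    and udot': "(udot has_derivative A) (at p)" and du': "\<And>X. ((\<lambda>t. du t X) has_real_derivative A X) (at 0)"
    and u': "((\<lambda>t. u t p) has_real_derivative udot p) (at 0)"
    using C2_family_mixed_partials[OF T U p] u_smooth unfolding udot smooth_on_def by metis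
  have \<sigma>0: "isotropic_surface_of B U g (\<sigma>t 0)"
    using \<sigma>t[rule_format, OF T(2)] u0 by (simp add: isotropic_surface_of_def)
  have "lorentz_form (g p)"
    using g p by (simp add: lorentz_metric_def)
  from dual_isotropic_conformal_variation[OF B' U p T \<sigma>0 this \<eta>t[rule_format, OF T(2)] du
      u0[rule_format] u' du' has_derivative_linear[OF udot'] \<sigma>t_eq[rule_format] \<eta>t[rule_format]]
  show "((\<lambda>t. \<eta>t t p) has_vector_derivative
      - (udot p *\<^sub>R \<eta>t 0 p) - Dd (\<sigma>t 0) p (gradient g udot p)) (at 0)"
    by (simp add: gradient_eq_metric_dual Dd_eq[OF udot'])
  have "((\<lambda>t. exp (u t p) *\<^sub>R \<sigma>t 0 p) has_vector_derivative udot p *\<^sub>R \<sigma>t 0 p) (at 0)"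
    using u' u0 p by (auto intro!: derivative_eq_intros)
  then show "((\<lambda>t. \<sigma>t t p) has_vector_derivative udot p *\<^sub>R \<sigma>t 0 p) (at 0)"
    by (rule has_vector_derivative_transform_within_open[OF _ T]) (simp add: \<sigma>t_eq p)
qed

end
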